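(* Let $\sigma_1=1.5002$ and $2\le H\le T$. Then \[ \int_H^T\log|\zeta(\sigma_1+it)|\,dt\ge -1.7655. \]
   Context: $\zeta$ is the Riemann zeta function. *)

theory Defs
  imports "HOL-Analysis.Analysis"
begin

text \<open>Riemann zeta function on the half-plane Re s > 1, given by its Dirichlet series
  (the only region needed here). Outside Re s > 1 the value is irrelevant.\<close>
definition zeta :: "complex \<Rightarrow> complex" where
  "zeta s = (\<Sum>n. 1 / (of_nat (Suc n)) powr s)"

end

theory Submission
  imports Defs "HOL-Number_Theory.Prime_Powers" "HOL-Real_Asymp.Real_Asymp"
begin

(* For Re s > 1 the logarithm of zeta is the Dirichlet series  log zeta(s) = sum_n b_n n^-s  with
   b_n = Lambda(n) / ln n.  We prove this without Euler products: both series are differentiable, the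
   Dirichlet convolution identity  zeta * (sum Lambda(n) n^-s) = sum ln(n) n^-s  shows that
   zeta(s) exp(-log zeta(s)) has derivative 0, and the limit along the real axis fixes the constant.
   Taking real parts, ln |zeta(sigma + it)| = sum_n c_n cos(t ln n) with c_n = b_n n^-sigma >= 0,
   and the series may be integrated termwise, giving sum_n c_n (sin(T ln n) - sin(H ln n)) / ln n.

   The terms are split by parity.  The even terms live on n = 2^k; writing x = 2^-sigma they form
   (S(T ln 2) + S(-H ln 2)) / ln 2 with S(psi) = sum_k x^k/k^2 sin(k psi), and an elementary
   trigonometric inequality for the first two harmonics bounds S from below.  Each odd term is
   bounded in absolute value by 2 Lambda(n) n^-(3/2) / ln(n)^2; these weights are summed
   numerically over n < 51 (with certified lower bounds for logarithms) and by a telescoping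
   bound beyond.  The argument only uses sigma >= 3/2, so the final theorem (sigma = 1.5002) is an
   instance of the bound integral_ln_zeta_lower_bound, valid for all sigma >= 3/2. *)

section \<open>The terms n powr (-s) of a Dirichlet series\<close>

(* The term n^-s, with the convention 0^-s = 0 so that series may start at n = 0. *)
definition npow :: "nat \<Rightarrow> complex \<Rightarrow> complex" where
  "npow n s = of_nat n powr (- s)"

lemma npow_0 [simp]: "npow 0 s = 0"
  by (simp add: npow_def)

lemma npow_1 [simp]: "npow (Suc 0) s = 1"
  by (simp add: npow_def)

lemma norm_npow: "cmod (npow n s) = real n powr (- Re s)"
  unfolding npow_def by (subst norm_powr_real_powr) auto

lemma norm_npow_le:
  assumes "a \<le> Re s"
  shows "cmod (npow n s) \<le> real n powr (- a)"
proof (cases "n = 0")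
  case False
  then show ?thesis unfolding norm_npow using assms by (intro powr_mono) auto
qed (simp add: norm_npow)

lemma npow_mult: "npow (m * k) s = npow m s * npow k s"
  unfolding npow_def of_nat_mult by (rule powr_times_real) auto

lemma has_field_derivative_npow:
  "((\<lambda>s. npow n s) has_field_derivative (- of_real (ln (real n)) * npow n s)) (at s)"
proof (cases "n = 0")
  case False
  have "((\<lambda>s. of_nat n powr (- s)) has_field_derivative Ln (of_nat n) * of_nat n powr (- s) * (- 1)) (at s)"
    using False by (intro DERIV_chain2[OF has_field_derivative_powr_right] derivative_eq_intros) auto
  then show ?thesis using False unfolding npow_def by (simp add: algebra_simps)
qed (simp add: npow_def)

lemma Re_npow: "Re (npow n (Complex \<sigma> t)) = real n powr (- \<sigma>) * cos (t * ln (real n))"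
proof (cases "n = 0")
  case False
  have "npow n (Complex \<sigma> t) = exp (- Complex \<sigma> t * of_real (ln (real n)))"
    using False by (simp add: npow_def powr_def)
  then show ?thesis
    using False by (simp add: Re_exp powr_def)
qed simp

lemma ln_nat_nonneg [simp]: "0 \<le> ln (real n)"
  by (cases n) auto

(* The logarithmic factor produced by differentiation costs only half of the excess exponent. *)
lemma ln_mult_powr_le:
  assumes "1 < a"
  shows "ln (real n) * real n powr (- a) \<le> 2 / (a - 1) * real n powr (- ((a + 1) / 2))"
proof (cases "n = 0")
  case False
  then have n: "1 \<le> real n" by simp
  have "ln (real n) \<le> real n powr ((a - 1) / 2) / ((a - 1) / 2)"
    using ln_powr_bound[OF n, of "(a - 1) / 2"] assms by simp
  then have "ln (real n) * real n powr (- a) \<le> real n powr ((a - 1) / 2) / ((a - 1) / 2) * real n powr (- a)"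
    by (rule mult_right_mono) simp
  also have "\<dots> = 2 / (a - 1) * (real n powr ((a - 1) / 2) * real n powr (- a))"
    by simp
  also have "real n powr ((a - 1) / 2) * real n powr (- a) = real n powr (- ((a + 1) / 2))"
  proof -
    have "(a - 1) / 2 + - a = - ((a + 1) / 2)" by (simp add: field_simps)
    then show ?thesis by (simp only: powr_add[symmetric])
  qed
  finally show ?thesis .
qed simp

section \<open>Dirichlet series in the half-plane Re s > 1\<close>

lemma summable_dirichlet_bounded:
  assumes "\<And>n. cmod (f n) \<le> 1" and "1 < Re s"
  shows "summable (\<lambda>n. cmod (f n * npow n s))"
proof (rule summable_comparison_test)
  show "summable (\<lambda>n. real n powr (- Re s))"
    using assms(2) by (subst summable_real_powr_iff) auto
  show "\<exists>N. \<forall>n\<ge>N. norm (cmod (f n * npow n s)) \<le> real n powr (- Re s)"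
    using mult_mono[OF assms(1) norm_npow_le[of "Re s" s]] by (auto simp: norm_mult)
qed

lemma summable_dirichlet_log:
  assumes f: "\<And>n. cmod (f n) \<le> ln (real n)" and a: "1 < a" "a \<le> Re s"
  shows "summable (\<lambda>n. cmod (f n * npow n s))"
proof (rule summable_comparison_test)
  show "summable (\<lambda>n. 2 / (a - 1) * real n powr (- ((a + 1) / 2)))"
    using a by (intro summable_mult, subst summable_real_powr_iff) auto
  have "cmod (f n) * cmod (npow n s) \<le> 2 / (a - 1) * real n powr (- ((a + 1) / 2))" for n
  proof -
    have "cmod (f n) * cmod (npow n s) \<le> ln (real n) * real n powr (- a)"
      using a by (intro mult_mono f norm_npow_le) auto
    also have "\<dots> \<le> 2 / (a - 1) * real n powr (- ((a + 1) / 2))"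
      by (rule ln_mult_powr_le[OF a(1)])
    finally show ?thesis .
  qed
  then show "\<exists>N. \<forall>n\<ge>N. norm (cmod (f n * npow n s)) \<le> 2 / (a - 1) * real n powr (- ((a + 1) / 2))"
    by (simp add: norm_mult)
qed

(* Termwise differentiation: the derivative series converges uniformly on every half-plane Re s > a > 1. *)
lemma has_field_derivative_dirichlet:
  assumes f: "\<And>n. cmod (f n) \<le> 1" and s: "1 < Re s"
  shows "((\<lambda>z. \<Sum>n. f n * npow n z) has_field_derivative
           (\<Sum>n. - f n * of_real (ln (real n)) * npow n s)) (at s)"
proof -
  define a where "a = (1 + Re s) / 2"
  define S where "S = {z. a < Re z}"
  have a: "1 < a" "a < Re s"
    using s by (auto simp: a_def)
  have S: "convex S" "s \<in> interior S"
    unfolding S_def using a convex_halfspace_Re_gt open_halfspace_Re_gt by (auto simp: interior_open)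
  show ?thesis
  proof (rule has_field_derivative_series'(2)[OF S(1) _ _ _ _ S(2)])
    show "((\<lambda>z. f n * npow n z) has_field_derivative - f n * of_real (ln (real n)) * npow n z)
            (at z within S)" for n z
      using DERIV_cmult[OF has_field_derivative_npow[of n z], of "f n"]
      by (auto intro: has_field_derivative_at_within simp: algebra_simps)
    show "uniformly_convergent_on S (\<lambda>k z. \<Sum>n<k. - f n * of_real (ln (real n)) * npow n z)"
    proof (rule Weierstrass_m_test'_ev)
      show "summable (\<lambda>n. 2 / (a - 1) * real n powr (- ((a + 1) / 2)))"
        using a by (intro summable_mult, subst summable_real_powr_iff) auto
      show "\<forall>\<^sub>F n in sequentially. \<forall>z\<in>S.
              norm (- f n * of_real (ln (real n)) * npow n z) \<le> 2 / (a - 1) * real n powr (- ((a + 1) / 2))"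
      proof (intro always_eventually allI ballI)
        fix n z assume "z \<in> S"
        then have "a \<le> Re z" by (simp add: S_def)
        have "norm (- f n * of_real (ln (real n)) * npow n z) = cmod (f n) * (ln (real n) * cmod (npow n z))"
          by (simp add: norm_mult)
        also have "\<dots> \<le> 1 * (ln (real n) * real n powr (- a))"
          using \<open>a \<le> Re z\<close> by (intro mult_mono mult_left_mono f norm_npow_le) auto
        also have "\<dots> \<le> 2 / (a - 1) * real n powr (- ((a + 1) / 2))"
          using ln_mult_powr_le[OF a(1)] by simp
        finally show "norm (- f n * of_real (ln (real n)) * npow n z)
                        \<le> 2 / (a - 1) * real n powr (- ((a + 1) / 2))" .
      qed
    qed
    show "s \<in> S" using S(2) interior_subset by blast
    show "summable (\<lambda>n. f n * npow n s)"
      by (rule summable_norm_cancel, rule summable_dirichlet_bounded[OF f s])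
  qed
qed

lemma infsum_mult_suminf:
  fixes A B :: "nat \<Rightarrow> complex"
  assumes sA: "summable (\<lambda>n. norm (A n))" and sB: "summable (\<lambda>n. norm (B n))"
  shows "(\<lambda>(m, k). A m * B k) summable_on UNIV"
    and "infsum (\<lambda>(m, k). A m * B k) UNIV = suminf A * suminf B"
proof -
  have nA: "(\<lambda>n. norm (A n)) summable_on UNIV" and nB: "(\<lambda>n. norm (B n)) summable_on UNIV"
    using sA sB by (auto intro: summable_nonneg_imp_summable_on)
  have "(\<lambda>p. norm (case p of (m, k) \<Rightarrow> A m * B k)) summable_on (UNIV \<times> UNIV)"
  proof (rule iffD2[OF Infinite_Sum.abs_summable_on_Sigma_iff], intro conjI ballI)
    show "(\<lambda>k. norm (case (m, k) of (m, k) \<Rightarrow> A m * B k)) summable_on UNIV" for m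
      by (simp add: norm_mult summable_on_cmult_right nB)
    have "infsum (\<lambda>k. cmod (B k)) UNIV \<ge> 0"
      by (rule infsum_nonneg) auto
    then show "(\<lambda>m. norm (infsum (\<lambda>k. norm (case (m, k) of (m, k) \<Rightarrow> A m * B k)) UNIV))
                 summable_on UNIV"
      by (simp add: norm_mult infsum_cmult_right nB summable_on_cmult_left nA)
  qed
  then show sum: "(\<lambda>(m, k). A m * B k) summable_on UNIV"
    using abs_summable_summable by fastforce
  have sums: "infsum A UNIV = suminf A" "infsum B UNIV = suminf B"
    using sA sB by (auto intro!: infsumI norm_summable_imp_has_sum summable_sums summable_norm_cancel)
  have "infsum (\<lambda>(m, k). A m * B k) UNIV = infsum (\<lambda>m. infsum (\<lambda>k. A m * B k) UNIV) UNIV"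
    using infsum_Sigma_banach[of "\<lambda>(m, k). A m * B k" UNIV "\<lambda>_. UNIV"] sum by simp
  also have "\<dots> = infsum A UNIV * infsum B UNIV"
    using norm_summable_imp_summable_on[OF sA] norm_summable_imp_summable_on[OF sB]
    by (simp add: infsum_cmult_right infsum_cmult_left)
  finally show "infsum (\<lambda>(m, k). A m * B k) UNIV = suminf A * suminf B"
    using sums by simp
qed

lemma dirichlet_series_mult:
  assumes sa: "summable (\<lambda>n. cmod (a n * npow n s))" and sb: "summable (\<lambda>n. cmod (b n * npow n s))"
  shows "(\<Sum>n. a n * npow n s) * (\<Sum>n. b n * npow n s)
           = infsum (\<lambda>n. (\<Sum>k | k dvd n. a (n div k) * b k) * npow n s) {1..}"
proof -
  define F where "F = (\<lambda>(m, k). a m * npow m s * (b k * npow k s))"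
  define G where "G = (\<lambda>(n, k). a (n div k) * b k * npow n s)"
  define P where "P = {1::nat..} \<times> {1::nat..}"
  define Q where "Q = Sigma {1::nat..} (\<lambda>n. {k. k dvd n})"
  define \<phi> where "\<phi> = (\<lambda>(m, k). (m * k :: nat, k))"
  have bij: "bij_betw \<phi> P Q"
    by (rule bij_betw_byWitness[where f' = "\<lambda>(n, k). (n div k, k)"])
       (auto simp: P_def Q_def \<phi>_def elim!: dvdE)
  have FG: "F p = G (\<phi> p)" if "p \<in> P" for p
    using that by (auto simp: F_def G_def P_def \<phi>_def npow_mult)
  note prod = infsum_mult_suminf[OF sa sb]
  have "F summable_on P"
    using prod(1) unfolding F_def by (rule summable_on_subset_banach) simp
  then have "(G \<circ> \<phi>) summable_on P"
    by (rule summable_on_cong[THEN iffD1, rotated]) (simp add: FG)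
  then have G_sum: "G summable_on Q"
    using summable_on_reindex_bij_betw[OF bij, of G] by (simp add: comp_def)
  have "(\<Sum>n. a n * npow n s) * (\<Sum>n. b n * npow n s) = infsum F UNIV"
    using prod(2) by (simp add: F_def)
  also have "\<dots> = infsum F P"
    by (rule infsum_cong_neutral) (auto simp: P_def F_def Suc_le_eq intro!: Nat.gr0I)
  also have "\<dots> = infsum (\<lambda>p. G (\<phi> p)) P"
    by (rule infsum_cong) (simp add: FG)
  also have "\<dots> = infsum G Q"
    by (rule infsum_reindex_bij_betw[OF bij])
  also have "\<dots> = infsum (\<lambda>n. infsum (\<lambda>k. G (n, k)) {k. k dvd n}) {1..}"
    using infsum_Sigma_banach[OF G_sum[unfolded Q_def]] unfolding Q_def by simp
  also have "\<dots> = infsum (\<lambda>n. (\<Sum>k | k dvd n. a (n div k) * b k) * npow n s) {1..}"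
    by (rule infsum_cong) (auto simp: G_def sum_distrib_right)
  finally show ?thesis .
qed

section \<open>The logarithm of the zeta function\<close>

lemma mangoldt_le_ln: "(mangoldt n :: real) \<le> ln (real n)"
  by (cases "n = 0") (simp_all add: mangoldt_le)

lemma zeta_eq_dirichlet:
  assumes "1 < Re s"
  shows "zeta s = (\<Sum>n. npow n s)"
proof -
  have "summable (\<lambda>n. npow n s)"
    using summable_norm_cancel[OF summable_dirichlet_bounded[of "\<lambda>_. 1" s]] assms by simp
  then have "(\<Sum>n. npow (Suc n) s) = (\<Sum>n. npow n s)"
    using suminf_split_head[of "\<lambda>n. npow n s"] by simp
  moreover have "zeta s = (\<Sum>n. npow (Suc n) s)"
    unfolding zeta_def npow_def by (simp add: powr_minus divide_inverse)
  ultimately show ?thesis by simp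
qed

(* zeta(s) sum Lambda(n) n^-s = sum ln(n) n^-s, since the divisor sum of Lambda is ln. *)
lemma zeta_times_mangoldt_series:
  assumes s: "1 < Re s"
  shows "(\<Sum>n. npow n s) * (\<Sum>n. mangoldt n * npow n s) = (\<Sum>n. of_real (ln (real n)) * npow n s)"
proof -
  have sum_one: "summable (\<lambda>n. cmod (1 * npow n s))"
    using summable_dirichlet_bounded[of "\<lambda>_. 1" s] s by simp
  have sum_mangoldt: "summable (\<lambda>n. cmod (mangoldt n * npow n s))"
    using s by (intro summable_dirichlet_log[of _ "Re s"]) (auto simp: norm_mangoldt mangoldt_le_ln)
  have sum_ln: "summable (\<lambda>n. cmod (of_real (ln (real n)) * npow n s))"
    using s by (intro summable_dirichlet_log[of _ "Re s"]) auto
  have "(\<Sum>n. npow n s) * (\<Sum>n. mangoldt n * npow n s)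
          = infsum (\<lambda>n. (\<Sum>k | k dvd n. 1 * mangoldt k) * npow n s) {1..}"
    using dirichlet_series_mult[OF sum_one sum_mangoldt] by simp
  also have "\<dots> = infsum (\<lambda>n. of_real (ln (real n)) * npow n s) {1..}"
    by (rule infsum_cong) (simp add: mangoldt_sum)
  also have "\<dots> = infsum (\<lambda>n. of_real (ln (real n)) * npow n s) UNIV"
    by (rule infsum_cong_neutral) (auto simp: not_less_eq_eq)
  also have "\<dots> = (\<Sum>n. of_real (ln (real n)) * npow n s)"
    by (rule infsumI, rule norm_summable_imp_has_sum[OF sum_ln], rule summable_sums,
        rule summable_norm_cancel[OF sum_ln])
  finally show ?thesis .
qed

definition log_coeff :: "nat \<Rightarrow> real" where
  "log_coeff n = mangoldt n / ln (real n)"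

definition zeta_log :: "complex \<Rightarrow> complex" where
  "zeta_log s = (\<Sum>n. of_real (log_coeff n) * npow n s)"

lemma log_coeff_nonneg: "0 \<le> log_coeff n"
  unfolding log_coeff_def using mangoldt_nonneg[of n] by simp

lemma log_coeff_le_1: "log_coeff n \<le> 1"
  unfolding log_coeff_def using mangoldt_le_ln[of n] mangoldt_nonneg[of n]
  by (cases "ln (real n) = 0") (auto simp: divide_le_eq)

lemma norm_log_coeff: "cmod (of_real (log_coeff n) :: complex) \<le> 1"
  using log_coeff_nonneg[of n] log_coeff_le_1[of n] by simp

lemma log_coeff_times_ln: "log_coeff n * ln (real n) = mangoldt n"
  unfolding log_coeff_def using mangoldt_le_ln[of n] mangoldt_nonneg[of n]
  by (cases "ln (real n) = 0") auto

lemma log_coeff_prime_power: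
  assumes "prime p" "0 < k"
  shows "log_coeff (p ^ k) = 1 / real k"
proof -
  have "ln (real p) > 0" using prime_gt_1_nat[OF assms(1)] by simp
  then show ?thesis using assms by (simp add: log_coeff_def ln_realpow)
qed

lemma log_coeff_not_primepow: "\<not> primepow n \<Longrightarrow> log_coeff n = 0"
  by (simp add: log_coeff_def mangoldt_def)

lemma has_field_derivative_zeta_series:
  assumes s: "1 < Re s"
  shows "((\<lambda>z. \<Sum>n. npow n z) has_field_derivative - (\<Sum>n. of_real (ln (real n)) * npow n s)) (at s)"
proof -
  have "summable (\<lambda>n. of_real (ln (real n)) * npow n s)"
    using s by (intro summable_norm_cancel[OF summable_dirichlet_log[of _ "Re s"]]) auto
  then have "(\<Sum>n. - 1 * of_real (ln (real n)) * npow n s) = - (\<Sum>n. of_real (ln (real n)) * npow n s)"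
    by (simp add: suminf_minus)
  then show ?thesis
    using has_field_derivative_dirichlet[of "\<lambda>_. 1", OF _ s] by simp
qed

lemma has_field_derivative_zeta_log:
  assumes s: "1 < Re s"
  shows "(zeta_log has_field_derivative - (\<Sum>n. mangoldt n * npow n s)) (at s)"
proof -
  have coeff: "of_real (log_coeff n) * of_real (ln (real n)) = (mangoldt n :: complex)" for n
    by (metis log_coeff_times_ln of_real_mult of_real_mangoldt)
  have "summable (\<lambda>n. mangoldt n * npow n s)"
    using s by (intro summable_norm_cancel[OF summable_dirichlet_log[of _ "Re s"]])
               (auto simp: norm_mangoldt mangoldt_le_ln)
  then have "(\<Sum>n. - of_real (log_coeff n) * of_real (ln (real n)) * npow n s)
               = - (\<Sum>n. mangoldt n * npow n s)"
    by (simp add: suminf_minus coeff mult.assoc[symmetric])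
  then show ?thesis
    using has_field_derivative_dirichlet[of "\<lambda>n. of_real (log_coeff n)", OF norm_log_coeff s]
    by (simp add: zeta_log_def[abs_def])
qed

lemma zeta_series_exp_constant:
  "\<exists>c. \<forall>s\<in>{s. 1 < Re s}. (\<Sum>n. npow n s) * exp (- zeta_log s) = c"
proof (rule has_field_derivative_zero_constant[OF convex_halfspace_Re_gt])
  fix s assume "s \<in> {s. 1 < Re s}"
  then have s: "1 < Re s" by simp
  define L where "L = (\<Sum>n. of_real (ln (real n)) * npow n s)"
  define D where "D = (\<Sum>n. mangoldt n * npow n s)"
  have "((\<lambda>z. exp (- zeta_log z)) has_field_derivative exp (- zeta_log s) * D) (at s)"
    using DERIV_chain2[OF DERIV_exp DERIV_minus[OF has_field_derivative_zeta_log[OF s]]]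
    by (simp add: D_def)
  from DERIV_mult[OF has_field_derivative_zeta_series[OF s] this]
  have "((\<lambda>z. (\<Sum>n. npow n z) * exp (- zeta_log z)) has_field_derivative
          exp (- zeta_log s) * ((\<Sum>n. npow n s) * D - L)) (at s)"
    by (simp add: L_def algebra_simps)
  moreover have "(\<Sum>n. npow n s) * D - L = 0"
    using zeta_times_mangoldt_series[OF s] by (simp add: D_def L_def)
  ultimately show "((\<lambda>z. (\<Sum>n. npow n z) * exp (- zeta_log z)) has_field_derivative 0)
                     (at s within {s. 1 < Re s})"
    by (auto intro: has_field_derivative_at_within)
qed

lemma dirichlet_tail_bound:
  assumes f: "\<And>n. cmod (f n) \<le> 1" and x: "2 \<le> x"
  shows "cmod ((\<Sum>n. f n * npow n (of_real x)) - f 1) \<le> 2 powr (2 - x) * (\<Sum>n. real n powr -2)"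
proof -
  define g where "g n = f n * npow n (of_real x)" for n
  have sum_g: "summable (\<lambda>n. cmod (g n))"
    unfolding g_def using x by (intro summable_dirichlet_bounded[OF f]) simp
  then have sum_g_tail: "summable (\<lambda>n. cmod (g (n + 2)))"
    by (rule summable_ignore_initial_segment)
  have sum_inv_sq: "summable (\<lambda>n. real n powr -2)"
    by (subst summable_real_powr_iff) auto
  have sum_inv_sq_tail: "summable (\<lambda>n. real (n + 2) powr -2)"
    using summable_ignore_initial_segment[OF sum_inv_sq, of 2] by simp
  have "(\<Sum>n. g (n + 2)) = (\<Sum>n. g n) - (\<Sum>i<2. g i)"
    by (rule suminf_minus_initial_segment[OF summable_norm_cancel[OF sum_g]])
  then have head: "(\<Sum>n. g n) - f 1 = (\<Sum>n. g (n + 2))"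
    by (simp add: g_def numeral_2_eq_2)
  have term_bound: "cmod (g (n + 2)) \<le> 2 powr (2 - x) * real (n + 2) powr -2" for n
  proof -
    have "cmod (g (n + 2)) \<le> 1 * real (n + 2) powr (- x)"
      unfolding g_def norm_mult using f[of "n + 2"] by (intro mult_mono) (auto simp: norm_npow)
    also have "real (n + 2) powr (- x) = real (n + 2) powr (2 - x) * real (n + 2) powr -2"
      by (simp add: powr_add[symmetric])
    also have "\<dots> \<le> 2 powr (2 - x) * real (n + 2) powr -2"
      using x by (intro mult_right_mono powr_mono2') auto
    finally show ?thesis by simp
  qed
  have "cmod ((\<Sum>n. g n) - f 1) \<le> (\<Sum>n. cmod (g (n + 2)))"
    unfolding head by (rule summable_norm[OF sum_g_tail])
  also have "\<dots> \<le> (\<Sum>n. 2 powr (2 - x) * real (n + 2) powr -2)"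
    by (rule suminf_le[OF term_bound sum_g_tail summable_mult[OF sum_inv_sq_tail]])
  also have "\<dots> = 2 powr (2 - x) * (\<Sum>n. real (n + 2) powr -2)"
    by (rule suminf_mult[OF sum_inv_sq_tail])
  also have "\<dots> \<le> 2 powr (2 - x) * (\<Sum>n. real n powr -2)"
    using suminf_minus_initial_segment[OF sum_inv_sq, where k=2]
    by (intro mult_left_mono) (auto intro!: sum_nonneg)
  finally show ?thesis by (simp add: g_def)
qed

lemma dirichlet_limit_at_top:
  assumes f: "\<And>n. cmod (f n) \<le> 1"
  shows "((\<lambda>x. \<Sum>n. f n * npow n (of_real x)) \<longlongrightarrow> f 1) at_top"
proof -
  have "((\<lambda>x::real. 2 powr (2 - x)) \<longlongrightarrow> 0) at_top"
    by real_asymp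
  then have lim: "((\<lambda>x::real. 2 powr (2 - x) * (\<Sum>n. real n powr -2)) \<longlongrightarrow> 0) at_top"
    by (rule tendsto_mult_left_zero)
  have bound: "\<forall>\<^sub>F x in at_top. cmod ((\<Sum>n. f n * npow n (of_real x)) - f 1)
                   \<le> 2 powr (2 - x) * (\<Sum>n. real n powr -2)"
    using eventually_ge_at_top[of "2::real"] by eventually_elim (rule dirichlet_tail_bound[OF f])
  have "((\<lambda>x. (\<Sum>n. f n * npow n (of_real x)) - f 1) \<longlongrightarrow> 0) at_top"
    by (rule Lim_null_comparison[OF bound lim])
  then show ?thesis by (simp add: LIM_zero_iff)
qed

(* The constant is 1, so zeta = exp o log zeta on Re s > 1. *)
lemma zeta_eq_exp_zeta_log:
  assumes s: "1 < Re s"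
  shows "zeta s = exp (zeta_log s)"
proof -
  obtain c where c: "\<And>z. 1 < Re z \<Longrightarrow> (\<Sum>n. npow n z) * exp (- zeta_log z) = c"
    using zeta_series_exp_constant by auto
  have "((\<lambda>x. \<Sum>n. 1 * npow n (of_real x)) \<longlongrightarrow> 1) at_top"
    by (rule dirichlet_limit_at_top) simp
  moreover have "((\<lambda>x. zeta_log (of_real x)) \<longlongrightarrow> 0) at_top"
    using dirichlet_limit_at_top[of "\<lambda>n. of_real (log_coeff n)", OF norm_log_coeff]
    by (simp add: zeta_log_def log_coeff_def)
  ultimately have "((\<lambda>x. (\<Sum>n. npow n (of_real x)) * exp (- zeta_log (of_real x))) \<longlongrightarrow> 1 * exp (- 0)) at_top"
    by (intro tendsto_intros) simp_all
  moreover have "\<forall>\<^sub>F x in at_top. (\<Sum>n. npow n (of_real x)) * exp (- zeta_log (of_real x)) = c"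
    using eventually_gt_at_top[of "1::real"] by eventually_elim (simp add: c)
  ultimately have "((\<lambda>x::real. c) \<longlongrightarrow> 1) at_top"
    by (simp add: tendsto_cong)
  then have "c = 1"
    by (simp add: tendsto_const_iff)
  then have "(\<Sum>n. npow n s) * exp (- zeta_log s) = 1"
    using c[OF s] by simp
  then show ?thesis
    using zeta_eq_dirichlet[OF s] by (simp add: exp_minus field_simps)
qed

section \<open>ln |zeta(sigma + it)| as a cosine series\<close>

definition zeta_coeff :: "real \<Rightarrow> nat \<Rightarrow> real" where
  "zeta_coeff \<sigma> n = log_coeff n * real n powr (- \<sigma>)"

lemma zeta_coeff_nonneg: "0 \<le> zeta_coeff \<sigma> n"
  by (simp add: zeta_coeff_def log_coeff_nonneg)

lemma zeta_coeff_le: "zeta_coeff \<sigma> n \<le> log_coeff n * real n powr (- a)" if "a \<le> \<sigma>"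
  unfolding zeta_coeff_def using that log_coeff_nonneg[of n]
  by (cases "n = 0") (auto intro!: mult_left_mono powr_mono)

lemma zeta_coeff_small: "n < 2 \<Longrightarrow> zeta_coeff \<sigma> n = 0"
  by (auto simp: zeta_coeff_def log_coeff_def less_2_cases_iff)

lemma summable_zeta_coeff:
  assumes "1 < \<sigma>"
  shows "summable (zeta_coeff \<sigma>)"
proof (rule summable_comparison_test)
  show "summable (\<lambda>n. real n powr (- \<sigma>))"
    using assms by (subst summable_real_powr_iff) auto
  show "\<exists>N. \<forall>n\<ge>N. norm (zeta_coeff \<sigma> n) \<le> real n powr (- \<sigma>)"
    using zeta_coeff_nonneg mult_right_mono[OF log_coeff_le_1, of "real _ powr (- \<sigma>)"]
    by (auto simp: zeta_coeff_def)
qed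

lemma ln_norm_zeta_cos_series:
  assumes "1 < \<sigma>"
  shows "ln (cmod (zeta (Complex \<sigma> t))) = (\<Sum>n. zeta_coeff \<sigma> n * cos (t * ln (real n)))"
proof -
  have "ln (cmod (zeta (Complex \<sigma> t))) = Re (zeta_log (Complex \<sigma> t))"
    using zeta_eq_exp_zeta_log[of "Complex \<sigma> t"] assms by simp
  also have "\<dots> = (\<Sum>n. Re (of_real (log_coeff n) * npow n (Complex \<sigma> t)))"
    unfolding zeta_log_def using assms
    by (intro Re_suminf summable_norm_cancel[OF summable_dirichlet_bounded[OF norm_log_coeff]]) simp
  also have "\<dots> = (\<Sum>n. zeta_coeff \<sigma> n * cos (t * ln (real n)))"
    by (simp add: Re_npow zeta_coeff_def mult.assoc)
  finally show ?thesis .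
qed

section \<open>Termwise integration of cosine series\<close>

(* The integral of c_n cos(t ln n) over [H, T], for n >= 2. *)
definition cos_integral_term :: "(nat \<Rightarrow> real) \<Rightarrow> real \<Rightarrow> real \<Rightarrow> nat \<Rightarrow> real" where
  "cos_integral_term c H T n = c n * (sin (T * ln (real n)) - sin (H * ln (real n))) / ln (real n)"

lemma has_integral_cos_term:
  assumes "H \<le> T" and "2 \<le> n"
  shows "((\<lambda>t. c n * cos (t * ln (real n))) has_integral cos_integral_term c H T n) {H..T}"
proof -
  define L where "L = ln (real n)"
  have "L > 0" using assms(2) by (simp add: L_def)
  then have "((\<lambda>t. c n * sin (t * L) / L) has_vector_derivative c n * cos (t * L)) (at t within {H..T})" for t
    unfolding has_real_derivative_iff_has_vector_derivative[symmetric]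
    by (auto intro!: derivative_eq_intros)
  from fundamental_theorem_of_calculus[OF assms(1) this]
  show ?thesis
    by (simp add: cos_integral_term_def L_def diff_divide_distrib right_diff_distrib)
qed

lemma abs_cos_integral_term:
  assumes "0 \<le> c n"
  shows "\<bar>cos_integral_term c H T n\<bar> \<le> 2 * c n / ln (real n)"
proof -
  have "\<bar>sin (T * ln (real n)) - sin (H * ln (real n))\<bar> \<le> 2"
    using abs_sin_le_one[of "T * ln (real n)"] abs_sin_le_one[of "H * ln (real n)"] by linarith
  then have "c n * \<bar>sin (T * ln (real n)) - sin (H * ln (real n))\<bar> \<le> c n * 2"
    by (rule mult_left_mono[OF _ assms])
  then show ?thesis
    using assms by (simp add: cos_integral_term_def abs_mult abs_divide mult.commute divide_right_mono)
qed

lemma summable_cos_integral_term: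
  assumes c: "\<And>n. 0 \<le> c n" "summable c" "\<And>n. n < 2 \<Longrightarrow> c n = 0"
  shows "summable (\<lambda>n. \<bar>cos_integral_term c H T n\<bar>)"
proof (rule summable_comparison_test[OF _ summable_mult[OF c(2), of "2 / ln 2"]])
  have "\<bar>cos_integral_term c H T n\<bar> \<le> 2 / ln 2 * c n" for n
  proof (cases "n < 2")
    case False
    then have "ln 2 \<le> ln (real n)" by simp
    then have "2 * c n / ln (real n) \<le> 2 * c n / ln 2"
      using c(1)[of n] False by (intro divide_left_mono) (auto intro!: mult_pos_pos)
    then show ?thesis
      using abs_cos_integral_term[of c n H T, OF c(1)] by simp
  qed (simp add: cos_integral_term_def c(3))
  then show "\<exists>N. \<forall>n\<ge>N. norm \<bar>cos_integral_term c H T n\<bar> \<le> 2 / ln 2 * c n"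
    by auto
qed

(* Dominated convergence: a cosine series with summable nonnegative coefficients is integrated termwise. *)
lemma integral_cos_series:
  assumes c: "\<And>n. 0 \<le> c n" "summable c" "\<And>n. n < 2 \<Longrightarrow> c n = 0" and HT: "H \<le> T"
  shows "integral {H..T} (\<lambda>t. \<Sum>n. c n * cos (t * ln (real n))) = (\<Sum>n. cos_integral_term c H T n)"
proof -
  have term_integral:
    "((\<lambda>t. c n * cos (t * ln (real n))) has_integral cos_integral_term c H T n) {H..T}" for n
    using has_integral_cos_term[OF HT] c(3)[of n] by (cases "n < 2") (auto simp: cos_integral_term_def)
  have cos_bound: "\<bar>c n * cos (t * ln (real n))\<bar> \<le> c n" for n t
    using c(1)[of n] by (auto simp: abs_mult intro!: mult_left_le)
  define f where "f k t = (\<Sum>n<k. c n * cos (t * ln (real n)))" for k t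
  have f_int: "(f k has_integral (\<Sum>n<k. cos_integral_term c H T n)) {H..T}" for k
    unfolding f_def by (intro has_integral_sum term_integral) auto
  have "(\<lambda>k. integral {H..T} (f k)) \<longlonglongrightarrow> integral {H..T} (\<lambda>t. \<Sum>n. c n * cos (t * ln (real n)))"
  proof (rule dominated_convergence(2)[where h = "\<lambda>_. suminf c"])
    show "f k integrable_on {H..T}" for k
      using f_int by blast
    show "(\<lambda>_. suminf c) integrable_on {H..T}"
      by (rule integrable_const_ivl)
    show "norm (f k t) \<le> suminf c" for k t
    proof -
      have "norm (f k t) \<le> (\<Sum>n<k. c n)"
        unfolding f_def real_norm_def using cos_bound by (intro order_trans[OF sum_abs sum_mono])
      also have "\<dots> \<le> suminf c"
        using c by (intro sum_le_suminf) auto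
      finally show ?thesis .
    qed
    show "(\<lambda>k. f k t) \<longlonglongrightarrow> (\<Sum>n. c n * cos (t * ln (real n)))" for t
      unfolding f_def using cos_bound
      by (intro summable_LIMSEQ summable_comparison_test[OF _ c(2)]) auto
  qed
  moreover have "integral {H..T} (f k) = (\<Sum>n<k. cos_integral_term c H T n)" for k
    using f_int by (rule integral_unique)
  ultimately have "(\<lambda>k. \<Sum>n<k. cos_integral_term c H T n)
                     \<longlonglongrightarrow> integral {H..T} (\<lambda>t. \<Sum>n. c n * cos (t * ln (real n)))"
    by simp
  then show ?thesis
    using summable_LIMSEQ[OF summable_rabs_cancel[OF summable_cos_integral_term[OF c]]]
    by (rule LIMSEQ_unique)
qed

section \<open>The contribution of the powers of two\<close>

(* The key inequality: -sin psi (1 + y cos psi) <= 63/62 when 32 y^2 <= 1 (a sum-of-squares argument). *)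
lemma sin_first_two_harmonics_bound:
  fixes y \<psi> :: real
  assumes y: "0 \<le> y" "32 * y\<^sup>2 \<le> 1"
  shows "- (sin \<psi> * (1 + y * cos \<psi>)) \<le> 63 / 62"
proof -
  define s where "s = sin \<psi>"
  define c where "c = cos \<psi>"
  have sc: "s\<^sup>2 + c\<^sup>2 = 1"
    unfolding s_def c_def by simp
  define Q where "Q = 31 * (1 - y\<^sup>2) * c\<^sup>2 - 62 * y * c + 1"
  have "31 * (1 - y\<^sup>2) * Q = (31 * (1 - y\<^sup>2) * c - 31 * y)\<^sup>2 + (31 - 992 * y\<^sup>2)"
    unfolding Q_def by (simp add: power2_eq_square algebra_simps)
  moreover have "31 - 992 * y\<^sup>2 \<ge> 0"
    using y by simp
  ultimately have "31 * (1 - y\<^sup>2) * Q \<ge> 0"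
    by simp
  moreover have "1 - y\<^sup>2 > 0"
    using y by simp
  ultimately have Q: "Q \<ge> 0"
    by (simp add: zero_le_mult_iff)
  have "63 + 62 * (s * (1 + y * c)) = 31 * (s + 1 + y * c)\<^sup>2 + Q + 31 * (1 - (s\<^sup>2 + c\<^sup>2))"
    unfolding Q_def by (simp add: power2_eq_square algebra_simps)
  then have "63 + 62 * (s * (1 + y * c)) \<ge> 0"
    using Q sc by simp
  then show ?thesis
    unfolding s_def c_def by simp
qed

definition sin_term :: "real \<Rightarrow> real \<Rightarrow> nat \<Rightarrow> real" where
  "sin_term x \<psi> k = x ^ Suc k / (real (Suc k))\<^sup>2 * sin (real (Suc k) * \<psi>)"

definition dyadic_bound :: "real \<Rightarrow> real" where
  "dyadic_bound x = x * (63 / 62) + x ^ 3 / (9 * (1 - x))"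

(* The first two terms are handled by the trigonometric inequality, the rest by a geometric tail. *)
lemma sine_series_lower_bound:
  assumes x: "0 \<le> x" "8 * x\<^sup>2 \<le> 1"
  shows "summable (sin_term x \<psi>)" and "(\<Sum>k. sin_term x \<psi> k) \<ge> - dyadic_bound x"
proof -
  have "x\<^sup>2 < 1\<^sup>2"
    using x by simp
  then have x1: "x < 1"
    by (rule power_less_imp_less_base) simp
  have geo: "summable (\<lambda>k. x ^ 3 / 9 * x ^ k)"
    using summable_geometric[of x] x x1 by (simp add: summable_mult)
  have tail_bound: "\<bar>sin_term x \<psi> (k + 2)\<bar> \<le> x ^ 3 / 9 * x ^ k" for k
  proof -
    have "9 \<le> (real (k + 3))\<^sup>2"
      using mult_mono[of 3 "real k + 3" 3 "real k + 3"] by (simp add: power2_eq_square)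
    have "\<bar>sin_term x \<psi> (k + 2)\<bar> = x ^ (k + 3) / (real (k + 3))\<^sup>2 * \<bar>sin (real (k + 3) * \<psi>)\<bar>"
      using x(1) by (simp add: sin_term_def abs_mult eval_nat_numeral)
    also have "\<dots> \<le> x ^ (k + 3) / 9 * 1"
      using \<open>9 \<le> (real (k + 3))\<^sup>2\<close> x(1)
      by (intro mult_mono divide_left_mono) (auto simp: abs_sin_le_one)
    finally have "\<bar>sin_term x \<psi> (k + 2)\<bar> \<le> x ^ (k + 3) / 9 * 1" .
    then show ?thesis
      by (simp add: power_add mult.commute)
  qed
  have tail_sum: "summable (\<lambda>k. sin_term x \<psi> (k + 2))"
    using tail_bound by (intro summable_comparison_test[OF _ geo]) auto
  then show sum: "summable (sin_term x \<psi>)"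
    by (simp only: summable_iff_shift)
  have "(\<Sum>k. sin_term x \<psi> (k + 2)) = (\<Sum>k. sin_term x \<psi> k) - (\<Sum>k<2. sin_term x \<psi> k)"
    by (rule suminf_minus_initial_segment[OF sum])
  then have split: "(\<Sum>k. sin_term x \<psi> k)
                      = sin_term x \<psi> 0 + sin_term x \<psi> 1 + (\<Sum>k. sin_term x \<psi> (k + 2))"
    by (simp add: numeral_2_eq_2)
  have "sin_term x \<psi> 0 + sin_term x \<psi> 1 = x * (sin \<psi> * (1 + (x / 2) * cos \<psi>))"
    using sin_double[of \<psi>] by (simp add: sin_term_def power2_eq_square algebra_simps)
  moreover have "- (sin \<psi> * (1 + (x / 2) * cos \<psi>)) \<le> 63 / 62"
    using x by (intro sin_first_two_harmonics_bound) (auto simp: power2_eq_square)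
  moreover have "x * (- (sin \<psi> * (1 + (x / 2) * cos \<psi>))) \<le> x * (63 / 62)"
    by (rule mult_left_mono[OF calculation(2) x(1)])
  ultimately have head: "sin_term x \<psi> 0 + sin_term x \<psi> 1 \<ge> - (x * (63 / 62))"
    by simp
  have "(\<Sum>k. - (x ^ 3 / 9 * x ^ k)) \<le> (\<Sum>k. sin_term x \<psi> (k + 2))"
  proof (rule suminf_le[OF _ summable_minus[OF geo] tail_sum])
    show "- (x ^ 3 / 9 * x ^ k) \<le> sin_term x \<psi> (k + 2)" for k
      using tail_bound[of k] by linarith
  qed
  moreover have "(\<Sum>k. x ^ 3 / 9 * x ^ k) = x ^ 3 / (9 * (1 - x))"
    using suminf_mult[of "\<lambda>k. x ^ k" "x ^ 3 / 9"] suminf_geometric[of x] summable_geometric[of x] x x1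
    by simp
  ultimately have "(\<Sum>k. sin_term x \<psi> (k + 2)) \<ge> - (x ^ 3 / (9 * (1 - x)))"
    using suminf_minus[OF geo] by simp
  then show "(\<Sum>k. sin_term x \<psi> k) \<ge> - dyadic_bound x"
    using split head by (simp add: dyadic_bound_def)
qed

lemma even_primepow_is_power_of_two:
  assumes "primepow (n :: nat)" "even n"
  shows "\<exists>k. n = 2 ^ Suc k"
proof -
  obtain p k where p: "prime p" "0 < k" "n = p ^ k"
    using assms(1) unfolding primepow_def by auto
  then have "(2::nat) dvd p ^ k"
    using assms(2) by simp
  then have "2 dvd p"
    using prime_dvd_power[OF two_is_prime_nat] by blast
  then have "p = 2"
    using primes_dvd_imp_eq[OF two_is_prime_nat p(1)] by simp
  then show ?thesis
    using p by (intro exI[of _ "k - 1"]) simp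
qed

lemma two_powr_neg_sq:
  fixes \<sigma> :: real
  assumes "3 / 2 \<le> \<sigma>"
  shows "8 * (2 powr (- \<sigma>))\<^sup>2 \<le> 1"
proof -
  have "(2::real) powr 3 = 8"
    using powr_realpow[of 2 3] by simp
  moreover have "(2 powr (- \<sigma>))\<^sup>2 = 2 powr (of_nat 2 * - \<sigma>)"
    by (rule powr_power) simp
  ultimately have "8 * (2 powr (- \<sigma>))\<^sup>2 = 2 powr (3 + of_nat 2 * - \<sigma>)"
    by (simp only: powr_add)
  also have "\<dots> \<le> 2 powr 0"
    using assms by (intro powr_mono) auto
  finally show ?thesis
    by simp
qed

lemma cos_integral_term_power_of_two:
  fixes \<sigma> :: real
  defines "x \<equiv> 2 powr (- \<sigma>)"
  shows "cos_integral_term (zeta_coeff \<sigma>) H T (2 ^ Suc k)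
           = (sin_term x (T * ln 2) k + sin_term x (- (H * ln 2)) k) / ln 2"
proof -
  define j where "j = Suc k"
  have "(2::real) ^ j = 2 powr real j"
    by (simp add: powr_realpow)
  then have "((2::real) ^ j) powr (- \<sigma>) = 2 powr (real j * - \<sigma>)"
    by (simp add: powr_powr)
  also have "\<dots> = x ^ j"
    by (simp add: x_def powr_power)
  finally have c: "zeta_coeff \<sigma> (2 ^ j) = x ^ j / real j"
    using log_coeff_prime_power[OF two_is_prime_nat, of j] by (simp add: zeta_coeff_def j_def)
  have alg: "a / J * (u - v) / (J * L) = (a / J\<^sup>2 * u + a / J\<^sup>2 * (- v)) / L" for a u v J L :: real
    by (simp add: power2_eq_square algebra_simps divide_inverse)
  have "cos_integral_term (zeta_coeff \<sigma>) H T (2 ^ j)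
          = x ^ j / real j * (sin (real j * (T * ln 2)) - sin (real j * (H * ln 2))) / (real j * ln 2)"
    by (simp add: cos_integral_term_def ln_realpow c mult_ac)
  also have "\<dots> = (x ^ j / (real j)\<^sup>2 * sin (real j * (T * ln 2))
                    + x ^ j / (real j)\<^sup>2 * sin (real j * - (H * ln 2))) / ln 2"
    unfolding alg by simp
  finally show ?thesis
    unfolding sin_term_def j_def[symmetric] .
qed

(* Only the powers of two contribute to the even part of the series. *)
lemma dyadic_part_lower_bound:
  fixes \<sigma> H T :: real
  assumes \<sigma>: "3 / 2 \<le> \<sigma>"
  defines "g \<equiv> cos_integral_term (zeta_coeff \<sigma>) H T"
  shows "(\<Sum>n. if even n then g n else 0) \<ge> - (2 / ln 2 * dyadic_bound (2 powr (- \<sigma>)))"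
proof -
  define x where "x = (2::real) powr (- \<sigma>)"
  define p where "p n = (if even n then g n else 0)" for n
  define pow2 where "pow2 k = (2::nat) ^ Suc k" for k
  have x: "0 \<le> x" "8 * x\<^sup>2 \<le> 1"
    using two_powr_neg_sq[OF \<sigma>] by (auto simp: x_def)
  have "summable (\<lambda>n. \<bar>g n\<bar>)"
    unfolding g_def using \<sigma>
    by (intro summable_cos_integral_term zeta_coeff_nonneg summable_zeta_coeff zeta_coeff_small) auto
  then have "summable p"
    unfolding p_def by (rule summable_comparison_test[rotated]) auto
  moreover have "strict_mono pow2"
    unfolding pow2_def by (rule strict_monoI) (simp add: power_strict_increasing)
  moreover have "p n = 0" if "n \<notin> range pow2" for n
  proof (cases "even n \<and> primepow n")
    case True
    then show ?thesis
      using that even_primepow_is_power_of_two by (auto simp: pow2_def)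
  next
    case False
    then show ?thesis
      by (auto simp: p_def g_def cos_integral_term_def zeta_coeff_def log_coeff_not_primepow)
  qed
  ultimately have "(\<lambda>k. p (pow2 k)) sums (\<Sum>n. p n)"
    using sums_mono_reindex summable_sums by blast
  moreover have "p (pow2 k) = (sin_term x (T * ln 2) k + sin_term x (- (H * ln 2)) k) / ln 2" for k
    using cos_integral_term_power_of_two[of \<sigma> H T k] by (simp add: p_def pow2_def g_def x_def)
  moreover have "(\<lambda>k. (sin_term x (T * ln 2) k + sin_term x (- (H * ln 2)) k) / ln 2)
                   sums (((\<Sum>k. sin_term x (T * ln 2) k) + (\<Sum>k. sin_term x (- (H * ln 2)) k)) / ln 2)"
    by (intro sums_divide sums_add summable_sums sine_series_lower_bound(1)[OF x])
  ultimately have "(\<Sum>n. p n) = ((\<Sum>k. sin_term x (T * ln 2) k) + (\<Sum>k. sin_term x (- (H * ln 2)) k)) / ln 2"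
    using sums_unique2 by simp
  moreover have "(\<Sum>k. sin_term x (T * ln 2) k) + (\<Sum>k. sin_term x (- (H * ln 2)) k) \<ge> - (2 * dyadic_bound x)"
    using sine_series_lower_bound(2)[OF x, of "T * ln 2"] sine_series_lower_bound(2)[OF x, of "- (H * ln 2)"]
    by simp
  ultimately show ?thesis
    unfolding p_def x_def using divide_right_mono[of "- (2 * dyadic_bound x)" _ "ln 2"] by (simp add: x_def)
qed

section \<open>The contribution of the odd integers\<close>

(* A summable majorant for the odd integrated terms, independent of sigma >= 3/2, H and T. *)
definition odd_weight :: "nat \<Rightarrow> real" where
  "odd_weight n = (if even n then 0 else 2 * log_coeff n * real n powr (- (3 / 2)) / ln (real n))"

lemma odd_weight_nonneg: "0 \<le> odd_weight n"
  by (simp add: odd_weight_def log_coeff_nonneg)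

lemma odd_weight_le: "odd_weight n \<le> 2 * real n powr (- (3 / 2)) / ln (real n)"
  unfolding odd_weight_def
  using log_coeff_le_1[of n] log_coeff_nonneg[of n]
  by (auto intro!: divide_right_mono mult_right_mono)

lemma odd_weight_prime_power:
  assumes "prime p" "0 < k" "odd p"
  shows "odd_weight (p ^ k) = 2 * real (p ^ k) powr (- (3 / 2)) / (real k ^ 2 * ln (real p))"
  using assms log_coeff_prime_power[OF assms(1,2)]
  by (simp add: odd_weight_def ln_realpow power2_eq_square)

lemma odd_weight_not_primepow: "\<not> primepow n \<Longrightarrow> odd_weight n = 0"
  by (simp add: odd_weight_def log_coeff_not_primepow)

lemma odd_weight_even: "even n \<Longrightarrow> odd_weight n = 0"
  by (simp add: odd_weight_def)

lemma odd_weight_1: "odd_weight (Suc 0) = 0"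
  by (simp add: odd_weight_def log_coeff_def)

lemma summable_odd_weight: "summable odd_weight"
proof (rule summable_comparison_test[OF _ summable_mult[OF summable_zeta_coeff[of "3 / 2"], of "2 / ln 2"]])
  have "odd_weight n \<le> 2 / ln 2 * zeta_coeff (3 / 2) n" if "2 \<le> n" for n
  proof -
    have "ln 2 \<le> ln (real n)"
      using that by simp
    then have "2 * log_coeff n * real n powr (- (3 / 2)) / ln (real n)
                 \<le> 2 * log_coeff n * real n powr (- (3 / 2)) / ln 2"
      using that by (intro divide_left_mono) (auto simp: log_coeff_nonneg intro!: mult_pos_pos)
    then show ?thesis
      by (simp add: odd_weight_def zeta_coeff_def zeta_coeff_nonneg[unfolded zeta_coeff_def])
  qed
  then show "\<exists>N. \<forall>n\<ge>N. norm (odd_weight n) \<le> 2 / ln 2 * zeta_coeff (3 / 2) n"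
    using odd_weight_nonneg by auto
qed simp

(* Each odd integrated term is at most 2 c_n / ln n <= odd_weight n in absolute value. *)
lemma odd_part_lower_bound:
  fixes \<sigma> H T :: real
  assumes \<sigma>: "3 / 2 \<le> \<sigma>"
  defines "g \<equiv> cos_integral_term (zeta_coeff \<sigma>) H T"
  shows "(\<Sum>n. if even n then 0 else g n) \<ge> - (\<Sum>n. odd_weight n)"
proof -
  have term_bound: "\<bar>g n\<bar> \<le> odd_weight n" if "odd n" for n
  proof -
    have "\<bar>g n\<bar> \<le> 2 * zeta_coeff \<sigma> n / ln (real n)"
      unfolding g_def by (rule abs_cos_integral_term[OF zeta_coeff_nonneg])
    also have "\<dots> \<le> 2 * (log_coeff n * real n powr (- (3 / 2))) / ln (real n)"
      using zeta_coeff_le[OF \<sigma>] by (intro divide_right_mono mult_left_mono) auto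
    finally show ?thesis
      using that by (simp add: odd_weight_def)
  qed
  have "summable (\<lambda>n. \<bar>g n\<bar>)"
    unfolding g_def using \<sigma>
    by (intro summable_cos_integral_term zeta_coeff_nonneg summable_zeta_coeff zeta_coeff_small) auto
  then have "summable (\<lambda>n. if even n then 0 else g n)"
    by (rule summable_comparison_test[rotated]) auto
  moreover have "- odd_weight n \<le> (if even n then 0 else g n)" for n
    using term_bound[of n] odd_weight_nonneg[of n] by auto
  ultimately have "(\<Sum>n. - odd_weight n) \<le> (\<Sum>n. if even n then 0 else g n)"
    by (intro suminf_le summable_minus summable_odd_weight)
  then show ?thesis
    using suminf_minus[OF summable_odd_weight] by simp
qed

lemma integral_ln_zeta_lower_bound:
  fixes \<sigma> H T :: real
  assumes \<sigma>: "3 / 2 \<le> \<sigma>" and HT: "H \<le> T"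
  shows "integral {H..T} (\<lambda>t. ln (cmod (zeta (Complex \<sigma> t))))
           \<ge> - (2 / ln 2 * dyadic_bound (2 powr (- \<sigma>))) - (\<Sum>n. odd_weight n)"
proof -
  define g where "g = cos_integral_term (zeta_coeff \<sigma>) H T"
  have c: "\<And>n. 0 \<le> zeta_coeff \<sigma> n" "summable (zeta_coeff \<sigma>)"
    "\<And>n. n < 2 \<Longrightarrow> zeta_coeff \<sigma> n = 0"
    using \<sigma> by (auto intro: zeta_coeff_nonneg summable_zeta_coeff zeta_coeff_small)
  have abs_sum: "summable (\<lambda>n. \<bar>g n\<bar>)"
    unfolding g_def by (rule summable_cos_integral_term[OF c])
  have parts: "summable (\<lambda>n. if even n then g n else 0)" "summable (\<lambda>n. if even n then 0 else g n)"
    by (auto intro: summable_comparison_test[OF _ abs_sum])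
  have "integral {H..T} (\<lambda>t. ln (cmod (zeta (Complex \<sigma> t))))
          = integral {H..T} (\<lambda>t. \<Sum>n. zeta_coeff \<sigma> n * cos (t * ln (real n)))"
    using \<sigma> by (simp add: ln_norm_zeta_cos_series)
  also have "\<dots> = (\<Sum>n. g n)"
    unfolding g_def by (rule integral_cos_series[OF c HT])
  also have "\<dots> = (\<Sum>n. (if even n then g n else 0) + (if even n then 0 else g n))"
    by (rule suminf_cong) simp
  also have "\<dots> = (\<Sum>n. if even n then g n else 0) + (\<Sum>n. if even n then 0 else g n)"
    by (rule suminf_add[OF parts, symmetric])
  finally show ?thesis
    using dyadic_part_lower_bound[OF \<sigma>, of H T] odd_part_lower_bound[OF \<sigma>, of H T]
    unfolding g_def by linarith
qed

section \<open>Numerical evaluation\<close>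

(* Certified lower bounds for logarithms: ln x >= 2 (u + u^3/3) with u = (x - 1)/(x + 1) for x >= 1,
   because ln t - 2 (u + u^3/3) has derivative (t - 1)^4 / (t (t + 1)^4) >= 0.  Applied to successive
   ratios b/a, it yields lower bounds for ln at the integers needed below. *)
lemma odd_series_derivative:
  fixes t :: real
  assumes "0 < t"
  defines "u \<equiv> (t - 1) / (t + 1)"
  shows "1 / t - 2 * (2 / (t + 1)^2 + (3 * u^2 * (2 / (t + 1)^2)) / 3) = (t - 1)^4 / (t * (t + 1)^4)"
proof -
  define A where "A = t + 1"
  have A: "A > 0"
    using assms by (simp add: A_def)
  have u: "u^2 = (t - 1)^2 / A^2"
    by (simp add: u_def A_def power_divide)
  have common_denominator: "1 / t - 4 / A^2 - 4 * v / A^4 = (A^4 - 4 * t * A^2 - 4 * t * v) / (t * A^4)" for v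
    using A assms by (simp add: field_simps)
  have numerator: "A^4 - 4 * t * A^2 - 4 * t * (t - 1)^2 = (t - 1)^4"
    by (simp add: A_def power2_eq_square power4_eq_xxxx algebra_simps)
  have "1 / t - 2 * (2 / (t + 1)^2 + (3 * u^2 * (2 / (t + 1)^2)) / 3) = 1 / t - 4 / A^2 - 4 * (t - 1)^2 / A^4"
    unfolding u A_def[symmetric] using A by (simp add: field_simps power2_eq_square power4_eq_xxxx)
  also have "\<dots> = (t - 1)^4 / (t * A^4)"
    unfolding common_denominator numerator ..
  finally show ?thesis
    by (simp add: A_def)
qed

lemma ln_ge_odd_series:
  fixes x :: real
  assumes "1 \<le> x"
  shows "2 * ((x - 1) / (x + 1) + ((x - 1) / (x + 1))^3 / 3) \<le> ln x"
proof -
  define f where "f t = ln t - 2 * ((t - 1) / (t + 1) + ((t - 1) / (t + 1))^3 / 3)" for t :: real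
  have "f 1 \<le> f x"
  proof (rule DERIV_nonneg_imp_nondecreasing[OF assms])
    fix t :: real
    assume "1 \<le> t" "t \<le> x"
    then have t: "t > 0" "t + 1 > 0"
      by auto
    define u where "u = (t - 1) / (t + 1)"
    have du: "((\<lambda>t. (t - 1) / (t + 1)) has_real_derivative 2 / (t + 1)^2) (at t)"
      using t by (auto intro!: derivative_eq_intros simp: power2_eq_square field_simps)
    have "(f has_real_derivative (1 / t - 2 * (2 / (t + 1)^2 + (3 * u^2 * (2 / (t + 1)^2)) / 3))) (at t)"
      unfolding f_def u_def by (rule derivative_eq_intros refl du DERIV_ln_divide t | simp)+
    moreover have "(t - 1)^4 / (t * (t + 1)^4) \<ge> 0"
      using t by simp
    ultimately show "\<exists>y. (f has_real_derivative y) (at t) \<and> 0 \<le> y"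
      using odd_series_derivative[OF t(1)] by (auto simp: u_def)
  qed
  then show ?thesis
    by (simp add: f_def)
qed

lemma ln_lower_bound_step:
  fixes a b la lb :: real
  assumes "0 < a" "a \<le> b" "la \<le> ln a" "lb \<le> la + 2 * ((b - a) / (b + a) + ((b - a) / (b + a))^3 / 3)"
  shows "lb \<le> ln b"
proof -
  have x: "1 \<le> b / a" using assms by simp
  have a0: "a \<noteq> 0" using assms by simp
  have e1: "b / a - 1 = (b - a) / a" using a0 by (simp add: diff_divide_distrib)
  have e2: "b / a + 1 = (b + a) / a" using a0 by (simp add: add_divide_distrib)
  have "((b / a) - 1) / ((b / a) + 1) = (b - a) / (b + a)"
    unfolding e1 e2 using a0 by simp
  with ln_ge_odd_series[OF x] have "2 * ((b - a) / (b + a) + ((b - a) / (b + a))^3 / 3) \<le> ln (b / a)"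
    by simp
  moreover have "ln (b / a) = ln b - ln a" using assms by (simp add: ln_div)
  ultimately show ?thesis using assms by linarith
qed

lemma ln_2_ge: "0.6913 \<le> ln (2::real)"
  by (rule ln_lower_bound_step[of 1 2 0]) (simp_all add: power_divide)

lemma ln_3_ge: "1.0966 \<le> ln (3::real)"
  by (rule ln_lower_bound_step[OF _ _ ln_2_ge]) (simp_all add: power_divide)

lemma ln_5_ge: "1.607 \<le> ln (5::real)"
  by (rule ln_lower_bound_step[OF _ _ ln_3_ge]) (simp_all add: power_divide)

lemma ln_7_ge: "1.9434 \<le> ln (7::real)"
  by (rule ln_lower_bound_step[OF _ _ ln_5_ge]) (simp_all add: power_divide)

lemma ln_11_ge: "2.3951 \<le> ln (11::real)"
  by (rule ln_lower_bound_step[OF _ _ ln_7_ge]) (simp_all add: power_divide)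

lemma ln_13_ge: "2.5621 \<le> ln (13::real)"
  by (rule ln_lower_bound_step[OF _ _ ln_11_ge]) (simp_all add: power_divide)

lemma ln_17_ge: "2.8303 \<le> ln (17::real)"
  by (rule ln_lower_bound_step[OF _ _ ln_13_ge]) (simp_all add: power_divide)

lemma ln_19_ge: "2.9415 \<le> ln (19::real)"
  by (rule ln_lower_bound_step[OF _ _ ln_17_ge]) (simp_all add: power_divide)

lemma ln_23_ge: "3.1325 \<le> ln (23::real)"
  by (rule ln_lower_bound_step[OF _ _ ln_19_ge]) (simp_all add: power_divide)

lemma ln_29_ge: "3.3642 \<le> ln (29::real)"
  by (rule ln_lower_bound_step[OF _ _ ln_23_ge]) (simp_all add: power_divide)

lemma ln_31_ge: "3.4308 \<le> ln (31::real)"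
  by (rule ln_lower_bound_step[OF _ _ ln_29_ge]) (simp_all add: power_divide)

lemma ln_37_ge: "3.6077 \<le> ln (37::real)"
  by (rule ln_lower_bound_step[OF _ _ ln_31_ge]) (simp_all add: power_divide)

lemma ln_41_ge: "3.7103 \<le> ln (41::real)"
  by (rule ln_lower_bound_step[OF _ _ ln_37_ge]) (simp_all add: power_divide)

lemma ln_43_ge: "3.7579 \<le> ln (43::real)"
  by (rule ln_lower_bound_step[OF _ _ ln_41_ge]) (simp_all add: power_divide)

lemma ln_47_ge: "3.8468 \<le> ln (47::real)"
  by (rule ln_lower_bound_step[OF _ _ ln_43_ge]) (simp_all add: power_divide)

lemma ln_51_ge: "3.9284 \<le> ln (51::real)"
  by (rule ln_lower_bound_step[OF _ _ ln_47_ge]) (simp_all add: power_divide)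

lemma powr_neg_three_halves:
  fixes x :: real
  assumes "1 \<le> x"
  shows "x powr (- (3 / 2)) = 1 / (x * sqrt x)"
proof -
  have "x powr (3 / 2) = x powr (1 + 1 / 2)"
    by simp
  also have "\<dots> = x * sqrt x"
    using assms by (subst powr_add) (simp add: powr_half_sqrt)
  finally show ?thesis
    by (simp add: powr_minus inverse_eq_divide)
qed

(* A weight bounded by 2 n^-(3/2) / L is at most B once a squared inequality free of square roots holds. *)
lemma odd_weight_le_numeric:
  assumes w: "odd_weight n \<le> 2 * real n powr (- (3 / 2)) / L"
    and l: "0 < l" "l \<le> L" and n: "1 \<le> n" and B: "0 < B" "(2 / (real n * l * B))\<^sup>2 \<le> real n"
  shows "odd_weight n \<le> B"
proof -
  have "2 / (real n * l * B) \<le> sqrt (real n)"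
    using B(2) by (rule real_le_rsqrt)
  then have "2 \<le> sqrt (real n) * (real n * l * B)"
    using n l B by (simp add: divide_le_eq mult.commute)
  then have "2 * real n powr (- (3 / 2)) / l \<le> B"
    using n l B by (simp add: powr_neg_three_halves divide_le_eq algebra_simps)
  moreover have "2 * real n powr (- (3 / 2)) / L \<le> 2 * real n powr (- (3 / 2)) / l"
    using l by (intro divide_left_mono) auto
  ultimately show ?thesis
    using w by linarith
qed

lemma odd_weight_le_of_ln:
  assumes "0 < l" "l \<le> ln (real n)" "1 \<le> n" "0 < B" "(2 / (real n * l * B))\<^sup>2 \<le> real n"
  shows "odd_weight n \<le> B"
  using assms by (intro odd_weight_le_numeric[OF odd_weight_le]) auto

lemma odd_weight_prime_power_le:
  assumes "prime p" "0 < k" "odd p" "0 < l" "l \<le> ln (real p)" "0 < B"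
    and "(2 / (real (p ^ k) * (real k ^ 2 * l) * B))\<^sup>2 \<le> real (p ^ k)"
  shows "odd_weight (p ^ k) \<le> B"
proof (rule odd_weight_le_numeric)
  show "odd_weight (p ^ k) \<le> 2 * real (p ^ k) powr (- (3 / 2)) / (real k ^ 2 * ln (real p))"
    using odd_weight_prime_power[OF assms(1-3)] by simp
  show "1 \<le> p ^ k"
    using prime_gt_0_nat[OF assms(1)] by (simp add: Suc_le_eq)
qed (use assms in auto)

lemma prime_3: "prime (3::nat)" by code_simp

lemma prime_5: "prime (5::nat)" by code_simp

lemma prime_7: "prime (7::nat)" by code_simp

lemma prime_11: "prime (11::nat)" by code_simp

lemma prime_13: "prime (13::nat)" by code_simp

lemma odd_weight_primes:
  shows "odd_weight 3 \<le> 0.351"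
    and "odd_weight 5 \<le> 0.1114"
    and "odd_weight 7 \<le> 0.0556"
    and "odd_weight 11 \<le> 0.0229"
    and "odd_weight 13 \<le> 0.0167"
    and "odd_weight 17 \<le> 0.0101"
    and "odd_weight 19 \<le> 0.0083"
    and "odd_weight 23 \<le> 0.0058"
    and "odd_weight 29 \<le> 0.0039"
    and "odd_weight 31 \<le> 0.0034"
    and "odd_weight 37 \<le> 0.0025"
    and "odd_weight 41 \<le> 0.0021"
    and "odd_weight 43 \<le> 0.0019"
    and "odd_weight 47 \<le> 0.0017"
proof -
  show "odd_weight 3 \<le> 0.351"
    using odd_weight_le_of_ln[of "1.0966" 3 "0.351"] ln_3_ge by (simp add: power_divide)
  show "odd_weight 5 \<le> 0.1114"
    using odd_weight_le_of_ln[of "1.607" 5 "0.1114"] ln_5_ge by (simp add: power_divide)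
  show "odd_weight 7 \<le> 0.0556"
    using odd_weight_le_of_ln[of "1.9434" 7 "0.0556"] ln_7_ge by (simp add: power_divide)
  show "odd_weight 11 \<le> 0.0229"
    using odd_weight_le_of_ln[of "2.3951" 11 "0.0229"] ln_11_ge by (simp add: power_divide)
  show "odd_weight 13 \<le> 0.0167"
    using odd_weight_le_of_ln[of "2.5621" 13 "0.0167"] ln_13_ge by (simp add: power_divide)
  show "odd_weight 17 \<le> 0.0101"
    using odd_weight_le_of_ln[of "2.8303" 17 "0.0101"] ln_17_ge by (simp add: power_divide)
  show "odd_weight 19 \<le> 0.0083"
    using odd_weight_le_of_ln[of "2.9415" 19 "0.0083"] ln_19_ge by (simp add: power_divide)
  show "odd_weight 23 \<le> 0.0058"
    using odd_weight_le_of_ln[of "3.1325" 23 "0.0058"] ln_23_ge by (simp add: power_divide)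
  show "odd_weight 29 \<le> 0.0039"
    using odd_weight_le_of_ln[of "3.3642" 29 "0.0039"] ln_29_ge by (simp add: power_divide)
  show "odd_weight 31 \<le> 0.0034"
    using odd_weight_le_of_ln[of "3.4308" 31 "0.0034"] ln_31_ge by (simp add: power_divide)
  show "odd_weight 37 \<le> 0.0025"
    using odd_weight_le_of_ln[of "3.6077" 37 "0.0025"] ln_37_ge by (simp add: power_divide)
  show "odd_weight 41 \<le> 0.0021"
    using odd_weight_le_of_ln[of "3.7103" 41 "0.0021"] ln_41_ge by (simp add: power_divide)
  show "odd_weight 43 \<le> 0.0019"
    using odd_weight_le_of_ln[of "3.7579" 43 "0.0019"] ln_43_ge by (simp add: power_divide)
  show "odd_weight 47 \<le> 0.0017"
    using odd_weight_le_of_ln[of "3.8468" 47 "0.0017"] ln_47_ge by (simp add: power_divide)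
qed

lemma odd_weight_prime_powers:
  shows "odd_weight 9 \<le> 0.0169"
    and "odd_weight 25 \<le> 0.0025"
    and "odd_weight 27 \<le> 0.0015"
    and "odd_weight 49 \<le> 0.0008"
proof -
  show "odd_weight 9 \<le> 0.0169"
    using odd_weight_prime_power_le[of 3 2 "1.0966" "0.0169"] ln_3_ge prime_3
    by (simp add: power_divide)
  show "odd_weight 25 \<le> 0.0025"
    using odd_weight_prime_power_le[of 5 2 "1.607" "0.0025"] ln_5_ge prime_5
    by (simp add: power_divide)
  show "odd_weight 27 \<le> 0.0015"
    using odd_weight_prime_power_le[of 3 3 "1.0966" "0.0015"] ln_3_ge prime_3
    by (simp add: power_divide)
  show "odd_weight 49 \<le> 0.0008"
    using odd_weight_prime_power_le[of 7 2 "1.9434" "0.0008"] ln_7_ge prime_7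
    by (simp add: power_divide)
qed

lemma odd_weight_composites:
  shows "odd_weight 15 = 0"
    and "odd_weight 21 = 0"
    and "odd_weight 33 = 0"
    and "odd_weight 35 = 0"
    and "odd_weight 39 = 0"
    and "odd_weight 45 = 0"
proof -
  show "odd_weight 15 = 0"
    using not_primepowI[OF prime_3 prime_5, of 15] by (simp add: odd_weight_not_primepow)
  show "odd_weight 21 = 0"
    using not_primepowI[OF prime_3 prime_7, of 21] by (simp add: odd_weight_not_primepow)
  show "odd_weight 33 = 0"
    using not_primepowI[OF prime_3 prime_11, of 33] by (simp add: odd_weight_not_primepow)
  show "odd_weight 35 = 0"
    using not_primepowI[OF prime_5 prime_7, of 35] by (simp add: odd_weight_not_primepow)
  show "odd_weight 39 = 0"
    using not_primepowI[OF prime_3 prime_13, of 39] by (simp add: odd_weight_not_primepow)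
  show "odd_weight 45 = 0"
    using not_primepowI[OF prime_3 prime_5, of 45] by (simp add: odd_weight_not_primepow)
qed

lemma odd_weight_head: "(\<Sum>n<51. odd_weight n) \<le> 0.619"
proof -
  have "(\<Sum>n<51. odd_weight n) = odd_weight 3 + odd_weight 5 + odd_weight 7 + odd_weight 9 +
      odd_weight 11 + odd_weight 13 + odd_weight 17 + odd_weight 19 +
      odd_weight 23 + odd_weight 25 + odd_weight 27 + odd_weight 29 + odd_weight 31 + odd_weight 37 +
      odd_weight 41 + odd_weight 43 + odd_weight 47 + odd_weight 49"
    by (simp add: lessThan_nat_numeral odd_weight_even odd_weight_composites odd_weight_1)
  then show ?thesis
    using odd_weight_primes odd_weight_prime_powers by simp
qed

(* Tail: n^-(3/2) is dominated by a difference of inverse square roots, which telescopes over odd n. *)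
lemma inverse_cube_sqrt_le_difference:
  fixes m :: real
  assumes "3 \<le> m"
  shows "1 / (m * sqrt m) \<le> 1 / sqrt (m - 2) - 1 / sqrt m"
proof -
  define a where "a = sqrt (m - 2)"
  define b where "b = sqrt m"
  have a: "a > 0" "a^2 = m - 2" using assms by (auto simp: a_def)
  have b: "b > 0" "b^2 = m" using assms by (auto simp: b_def)
  have ab: "a \<le> b" using assms by (simp add: a_def b_def)
  have "(b - a) * (b + a) = 2" using a b by (simp add: power2_eq_square algebra_simps)
  then have bma: "b - a = 2 / (a + b)" using a b by (simp add: field_simps)
  have "2 / (a + b) \<ge> 2 / (2 * b)" using a b ab by (intro divide_left_mono) auto
  then have "b - a \<ge> 1 / b" using bma b by simp
  then have "(b - a) / (a * b) \<ge> (1 / b) / (a * b)" using a b by (intro divide_right_mono) auto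
  also have "(1 / b) / (a * b) \<ge> (1 / b) / (b * b)"
    using a b ab by (intro divide_left_mono mult_mono) auto
  finally have "(b - a) / (a * b) \<ge> 1 / (b * b * b)" by (simp add: field_simps)
  moreover have "(b - a) / (a * b) = 1 / a - 1 / b" using a b by (simp add: field_simps)
  moreover have "b * b * b = m * sqrt m" using b by (simp add: b_def power2_eq_square)
  ultimately show ?thesis using assms by (simp add: a_def b_def)
qed

definition sqrt_telescope :: "nat \<Rightarrow> real" where
  "sqrt_telescope n = (if odd n then 1 / sqrt (real n - 2) else 1 / sqrt (real n - 1))"

lemma odd_weight_le_telescope:
  assumes n: "3 \<le> n" and l: "0 < l" "l \<le> ln (real n)"
  shows "odd_weight n \<le> 2 / l * (sqrt_telescope n - sqrt_telescope (Suc n))"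
proof (cases "odd n")
  case True
  have n3: "(3::real) \<le> real n"
    using n by simp
  have "odd_weight n \<le> 2 * real n powr (- (3 / 2)) / ln (real n)"
    by (rule odd_weight_le)
  also have "\<dots> \<le> 2 * real n powr (- (3 / 2)) / l"
    using l by (intro divide_left_mono) auto
  also have "\<dots> = 2 / l * (1 / (real n * sqrt (real n)))"
    using n3 by (simp add: powr_neg_three_halves)
  also have "\<dots> \<le> 2 / l * (sqrt_telescope n - sqrt_telescope (Suc n))"
    using inverse_cube_sqrt_le_difference[OF n3] True l
    by (intro mult_left_mono) (auto simp: sqrt_telescope_def)
  finally show ?thesis .
qed (simp add: odd_weight_def sqrt_telescope_def)

lemma odd_weight_tail:
  assumes N: "3 \<le> N" and l: "0 < l" "l \<le> ln (real N)"
  shows "(\<Sum>k. odd_weight (k + N)) \<le> 2 / l * sqrt_telescope N"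
proof -
  have "(\<lambda>k. sqrt_telescope (k + N)) \<longlonglongrightarrow> 0"
  proof (rule Lim_null_comparison)
    show "(\<lambda>k. 1 / sqrt (real k + 1)) \<longlonglongrightarrow> 0"
      by real_asymp
    show "\<forall>\<^sub>F k in sequentially. norm (sqrt_telescope (k + N)) \<le> 1 / sqrt (real k + 1)"
      using N by (intro always_eventually allI)
                 (auto simp: sqrt_telescope_def intro!: divide_left_mono mult_pos_pos)
  qed
  from telescope_sums'[OF this]
  have "(\<lambda>k. sqrt_telescope (k + N) - sqrt_telescope (Suc (k + N))) sums sqrt_telescope N"
    by simp
  then have tele: "(\<lambda>k. 2 / l * (sqrt_telescope (k + N) - sqrt_telescope (Suc (k + N))))
                     sums (2 / l * sqrt_telescope N)"
    by (rule sums_mult)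
  have "(\<Sum>k. odd_weight (k + N)) \<le> (\<Sum>k. 2 / l * (sqrt_telescope (k + N) - sqrt_telescope (Suc (k + N))))"
  proof (rule suminf_le)
    show "odd_weight (k + N) \<le> 2 / l * (sqrt_telescope (k + N) - sqrt_telescope (Suc (k + N)))" for k
    proof (rule odd_weight_le_telescope)
      have "ln (real N) \<le> ln (real (k + N))"
        using N by simp
      then show "l \<le> ln (real (k + N))"
        using l by linarith
    qed (use N l in auto)
    show "summable (\<lambda>k. odd_weight (k + N))"
      using summable_ignore_initial_segment[OF summable_odd_weight] .
    show "summable (\<lambda>k. 2 / l * (sqrt_telescope (k + N) - sqrt_telescope (Suc (k + N))))"
      using tele by (rule sums_summable)
  qed
  also have "\<dots> = 2 / l * sqrt_telescope N"
    using tele by (rule sums_unique[symmetric])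
  finally show ?thesis .
qed

(* The total weight: the terms below 51 plus the telescoped tail 2 / (7 ln 51). *)
lemma odd_weight_sum: "(\<Sum>n. odd_weight n) \<le> 0.6918"
proof -
  have "(\<Sum>n. odd_weight n) = (\<Sum>k. odd_weight (k + 51)) + (\<Sum>n<51. odd_weight n)"
    by (rule suminf_split_initial_segment[OF summable_odd_weight])
  moreover have "(\<Sum>k. odd_weight (k + 51)) \<le> 2 / 3.9284 * sqrt_telescope 51"
    using ln_51_ge by (intro odd_weight_tail) simp_all
  moreover have "sqrt_telescope 51 = 1 / 7"
    using real_sqrt_eq_iff[of 49 "7\<^sup>2"] by (simp add: sqrt_telescope_def)
  ultimately show ?thesis
    using odd_weight_head by simp
qed

lemma dyadic_bound_mono:
  assumes "0 \<le> x" "x \<le> b" "b < 1"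
  shows "dyadic_bound x \<le> dyadic_bound b"
proof -
  have "x ^ 3 \<le> b ^ 3"
    using assms by (intro power_mono) auto
  then have "x ^ 3 / (9 * (1 - x)) \<le> b ^ 3 / (9 * (1 - b))"
    using assms by (intro frac_le) auto
  then show ?thesis
    using assms by (simp add: dyadic_bound_def)
qed

lemma dyadic_term_numeric:
  fixes \<sigma> :: real
  assumes "3 / 2 \<le> \<sigma>"
  shows "2 / ln 2 * dyadic_bound (2 powr (- \<sigma>)) \<le> 1.0614"
proof -
  define x where "x = (2::real) powr (- \<sigma>)"
  define b where "b = (0.35356::real)"
  have "x\<^sup>2 \<le> b\<^sup>2"
    using two_powr_neg_sq[OF assms] by (simp add: x_def b_def power2_eq_square)
  then have x: "0 \<le> x" "x \<le> b"
    using power2_le_imp_le[of x b] by (auto simp: x_def b_def)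
  then have K: "0 \<le> dyadic_bound x" "dyadic_bound x \<le> dyadic_bound b"
    using dyadic_bound_mono[OF x] by (auto simp: dyadic_bound_def b_def)
  have "2 / ln 2 * dyadic_bound x \<le> 2 / 0.6913 * dyadic_bound x"
    using ln_2_ge K by (intro mult_right_mono divide_left_mono) auto
  also have "\<dots> \<le> 2 / 0.6913 * dyadic_bound b"
    using K by (intro mult_left_mono) auto
  also have "\<dots> \<le> 1.0614"
    by (simp add: dyadic_bound_def b_def power_divide)
  finally show ?thesis
    by (simp add: x_def)
qed

(* The case sigma = 1.5002. *)
theorem lemma4p1:
  fixes H T :: real
  assumes "2 \<le> H" and "H \<le> T"
  shows "integral {H..T} (\<lambda>t. ln (cmod (zeta (Complex 1.5002 t)))) \<ge> -1.7655"
proof -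
  have "integral {H..T} (\<lambda>t. ln (cmod (zeta (Complex 1.5002 t))))
          \<ge> - (2 / ln 2 * dyadic_bound (2 powr (- 1.5002))) - (\<Sum>n. odd_weight n)"
    using assms(2) by (intro integral_ln_zeta_lower_bound) simp_all
  moreover have "2 / ln 2 * dyadic_bound (2 powr (- 1.5002)) \<le> 1.0614"
    by (rule dyadic_term_numeric) simp
  moreover have "(\<Sum>n. odd_weight n) \<le> 0.6918"
    by (rule odd_weight_sum)
  ultimately show ?thesis
    by simp
qed

end
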